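(* For every $J\subseteq[n-1]$, $$\varphi(X^0_J)=2^{1+\#J}\sum_{F\in\mathring{\mathcal{F}}_n,\ F\subseteq J\cup(J+1)}\mathring{P}_F\quad\text{and}\quad\varphi(Y^0_J)=\sum_{F\in\mathring{\mathcal{F}}_n,\ F\subseteq J\triangle(J+1)}2^{1+\#F}\mathring{P}_F.$$
   Context: $B_n$: signed permutations $w=w_1\dots w_n$, values ordered $\cdots<-2<-1<1<2<\cdots$, $w_0=0$; $\mathrm{Des}(w)=\{i\in\{0,\dots,n-1\}:w_i>w_{i+1}\}$; $Y_J=\sum_{\mathrm{Des}(w)=J}w$, $X_J=\sum_{\mathrm{Des}(w)\subseteq J}w$. For $J\subseteq[n-1]$, $X^0_J=X_{\{0\}\cup J}$ and $Y^0_J=Y_{\{0\}\cup J}+Y_J$. $\varphi$: linear extension of $w\mapsto|w_1|\dots|w_n|$. For $u\in\mathfrak{S}_n$, $\mathring{\mathrm{Peak}}(u)=\{i\in\{2,\dots,n-1\}:u_{i-1}<u_i>u_{i+1}\}$; $\mathring{\mathcal{F}}_n$ is the set of subsets of $\{2,\dots,n-1\}$ with no two consecutive integers; $\mathring{P}_F=\sum_{\mathring{\mathrm{Peak}}(u)=F}u$. $J+1=\{j+1:j\in J\}$, $\triangle$ = symmetric difference. *)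

theory Defs
  imports Main
begin

text \<open>Signed permutations of [n] are integer lists w = w_1 ... w_n (w_i = w ! (i-1))
  such that |w_1|, ..., |w_n| is a permutation of 1..n.  The order
  ... < -2 < -1 < 1 < 2 < ... is the usual order on int, and w_0 = 0.
  Elements of the group algebras are represented by their coefficient
  functions (int-valued, finitely supported).\<close>

definition signed_perms :: "nat \<Rightarrow> int list set" where
  "signed_perms n = {w. length w = n \<and> distinct (map abs w) \<and> set (map abs w) = {1..int n}}"

definition perms :: "nat \<Rightarrow> nat list set" where
  "perms n = {u. length u = n \<and> distinct u \<and> set u = {1..n}}"

definition wval :: "int list \<Rightarrow> nat \<Rightarrow> int" where
  "wval w i = (if i = 0 then 0 else w ! (i - 1))"

definition Des :: "int list \<Rightarrow> nat set" where
  "Des w = {i. i < length w \<and> wval w i > wval w (i + 1)}"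

definition Ysum :: "nat \<Rightarrow> nat set \<Rightarrow> int list \<Rightarrow> int" where
  "Ysum n J = (\<lambda>w. if w \<in> signed_perms n \<and> Des w = J then 1 else 0)"

definition Xsum :: "nat \<Rightarrow> nat set \<Rightarrow> int list \<Rightarrow> int" where
  "Xsum n J = (\<lambda>w. if w \<in> signed_perms n \<and> Des w \<subseteq> J then 1 else 0)"

definition X0 :: "nat \<Rightarrow> nat set \<Rightarrow> int list \<Rightarrow> int" where
  "X0 n J = Xsum n (insert 0 J)"

definition Y0 :: "nat \<Rightarrow> nat set \<Rightarrow> int list \<Rightarrow> int" where
  "Y0 n J = (\<lambda>w. Ysum n (insert 0 J) w + Ysum n J w)"

text \<open>phi: linear extension of w \<mapsto> |w_1| ... |w_n| from the group algebra of B_n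
  to that of S_n (coefficient of u is the sum of coefficients of its preimages)\<close>
definition phi :: "nat \<Rightarrow> (int list \<Rightarrow> int) \<Rightarrow> nat list \<Rightarrow> int" where
  "phi n f = (\<lambda>u. \<Sum>w \<in> {w \<in> signed_perms n. map (\<lambda>x. nat \<bar>x\<bar>) w = u}. f w)"

text \<open>interior peak set, positions 1-indexed: u_i = u ! (i-1)\<close>
definition Peak0 :: "nat list \<Rightarrow> nat set" where
  "Peak0 u = {i. 2 \<le> i \<and> i + 1 \<le> length u \<and>
      u ! (i - 2) < u ! (i - 1) \<and> u ! (i - 1) > u ! i}"

definition F0 :: "nat \<Rightarrow> nat set set" where
  "F0 n = {F. F \<subseteq> {2..n - 1} \<and> (\<forall>i\<in>F. i + 1 \<notin> F)}"

definition P0 :: "nat \<Rightarrow> nat set \<Rightarrow> nat list \<Rightarrow> int" where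
  "P0 n F = (\<lambda>u. if u \<in> perms n \<and> Peak0 u = F then 1 else 0)"

end

theory Submission
  imports Defs
begin

(* Fix u in S_n; the fibre of phi over u consists of the 2^n ways of signing its entries.
   For 1 <= i < n, whether i is a descent of a signed word w over u depends only on the sign
   of the entry of larger absolute value among w_i, w_(i+1): negative if it is w_(i+1),
   positive if it is w_i.  Descents at 0 are unrestricted in both X^0_J and Y^0_J, so both
   count signings in which the descent status is prescribed on a set S of positions
   (S = [n-1] - J, "no descent", for X^0_J; S = [n-1], "descent iff in J", for Y^0_J).
   Prescribing the descents on S prescribes the signs at the entries selected by S; two
   positions of S select the same entry exactly when they flank an interior peak of u, where
   the two requirements either agree or contradict each other.  Hence the count is 0 or
   2^(n - #selected entries), which gives the two formulas. *)

lemma card_subsets_with_prescribed_members: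
  assumes "finite A" and "t ` S \<subseteq> A"
  shows "card {N. N \<subseteq> A \<and> (\<forall>i\<in>S. t i \<in> N \<longleftrightarrow> P i)} =
    (if \<forall>i\<in>S. \<forall>j\<in>S. t i = t j \<longrightarrow> P i = P j then 2 ^ card (A - t ` S) else 0)"
proof (cases "\<forall>i\<in>S. \<forall>j\<in>S. t i = t j \<longrightarrow> P i = P j")
  case True
  define R where "R = t ` {i \<in> S. P i}"
  have R: "t i \<in> R \<longleftrightarrow> P i" if "i \<in> S" for i
    using True that unfolding R_def by blast
  have "bij_betw (\<lambda>M. M \<union> R) (Pow (A - t ` S)) {N. N \<subseteq> A \<and> (\<forall>i\<in>S. t i \<in> N \<longleftrightarrow> P i)}"
  proof (rule bij_betw_byWitness[where f' = "\<lambda>N. N - t ` S"])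
    show "\<forall>M \<in> Pow (A - t ` S). M \<union> R - t ` S = M"
      unfolding R_def by blast
    show "\<forall>N \<in> {N. N \<subseteq> A \<and> (\<forall>i\<in>S. t i \<in> N \<longleftrightarrow> P i)}. N - t ` S \<union> R = N"
      using R unfolding R_def by blast
    show "(\<lambda>M. M \<union> R) ` Pow (A - t ` S) \<subseteq> {N. N \<subseteq> A \<and> (\<forall>i\<in>S. t i \<in> N \<longleftrightarrow> P i)}"
      using R assms(2) unfolding R_def by blast
    show "(\<lambda>N. N - t ` S) ` {N. N \<subseteq> A \<and> (\<forall>i\<in>S. t i \<in> N \<longleftrightarrow> P i)} \<subseteq> Pow (A - t ` S)"
      by blast
  qed
  then have "card {N. N \<subseteq> A \<and> (\<forall>i\<in>S. t i \<in> N \<longleftrightarrow> P i)} = card (Pow (A - t ` S))"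
    by (rule bij_betw_same_card[symmetric])
  with True assms(1) show ?thesis
    by (simp only: if_P card_Pow finite_Diff)
next
  case False
  then obtain i j where ij: "i \<in> S" "j \<in> S" "t i = t j" "P i \<noteq> P j" by blast
  have "\<not> (\<forall>k\<in>S. t k \<in> N \<longleftrightarrow> P k)" for N
  proof
    assume "\<forall>k\<in>S. t k \<in> N \<longleftrightarrow> P k"
    then have "t i \<in> N \<longleftrightarrow> P i" "t j \<in> N \<longleftrightarrow> P j" using ij(1,2) by blast+
    with ij(3,4) show False by simp
  qed
  then have "{N. N \<subseteq> A \<and> (\<forall>i\<in>S. t i \<in> N \<longleftrightarrow> P i)} = {}" by blast
  then show ?thesis unfolding if_not_P[OF False] by (simp only: card.empty)
qed

lemma mem_image_plus1_iff: "0 < (p::nat) \<Longrightarrow> p \<in> (\<lambda>j. j + 1) ` J \<longleftrightarrow> p - 1 \<in> J"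
  by (cases p) (auto simp: image_iff)

definition flip_signs :: "nat list \<Rightarrow> nat set \<Rightarrow> int list" where
  "flip_signs u N = map (\<lambda>k. if k \<in> N then - int (u ! k) else int (u ! k)) [0..<length u]"

lemma length_flip_signs [simp]: "length (flip_signs u N) = length u"
  by (simp add: flip_signs_def)

lemma nth_flip_signs [simp]:
  "k < length u \<Longrightarrow> flip_signs u N ! k = (if k \<in> N then - int (u ! k) else int (u ! k))"
  by (simp add: flip_signs_def)

lemma abs_flip_signs: "map (\<lambda>x. nat \<bar>x\<bar>) (flip_signs u N) = u"
  by (rule nth_equalityI) simp_all

lemma inj_on_flip_signs:
  assumes "0 \<notin> set u"
  shows "inj_on (flip_signs u) (Pow {..<length u})"
proof (rule inj_onI)
  fix N M assume N: "N \<in> Pow {..<length u}" and M: "M \<in> Pow {..<length u}"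
    and eq: "flip_signs u N = flip_signs u M"
  have sign: "k \<in> N \<longleftrightarrow> flip_signs u N ! k < 0" if "k < length u" for k N
  proof -
    have "u ! k \<noteq> 0" using nth_mem[OF that] assms by metis
    then show ?thesis using that by simp
  qed
  show "N = M"
  proof (intro set_eqI)
    fix k
    show "k \<in> N \<longleftrightarrow> k \<in> M"
      using N M sign[of k N] sign[of k M] unfolding eq by auto
  qed
qed

lemma fiber_eq_image_flip_signs:
  assumes "u \<in> perms n"
  shows "{w \<in> signed_perms n. map (\<lambda>x. nat \<bar>x\<bar>) w = u} = flip_signs u ` Pow {..<n}"
proof (intro equalityI subsetI)
  fix w assume "w \<in> {w \<in> signed_perms n. map (\<lambda>x. nat \<bar>x\<bar>) w = u}"
  then have len: "length w = length u" and u: "u = map (\<lambda>x. nat \<bar>x\<bar>) w"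
    by (auto simp: signed_perms_def)
  have "w = flip_signs u {k. k < n \<and> w ! k < 0}"
    using len u assms by (intro nth_equalityI) (auto simp: perms_def)
  moreover have "{k. k < n \<and> w ! k < 0} \<in> Pow {..<n}" by auto
  ultimately show "w \<in> flip_signs u ` Pow {..<n}" by blast
next
  fix w assume "w \<in> flip_signs u ` Pow {..<n}"
  then obtain N where w: "w = flip_signs u N" by blast
  have abs_w: "map abs w = map int u"
    unfolding w by (rule nth_equalityI) simp_all
  moreover have "set (map int u) = {1..int n}"
    using assms by (simp add: perms_def image_int_atLeastAtMost)
  moreover have "distinct (map int u)"
    using assms by (simp add: perms_def distinct_map)
  ultimately have "w \<in> signed_perms n"
    using assms unfolding signed_perms_def mem_Collect_eq abs_w by (simp add: w perms_def)
  then show "w \<in> {w \<in> signed_perms n. map (\<lambda>x. nat \<bar>x\<bar>) w = u}"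
    by (simp add: w abs_flip_signs)
qed

lemma permsD:
  assumes "u \<in> perms n"
  shows "length u = n" "distinct u" "0 \<notin> set u"
  using assms by (auto simp: perms_def)

lemma abs_signed_perm_in_perms:
  assumes "w \<in> signed_perms n"
  shows "map (\<lambda>x. nat \<bar>x\<bar>) w \<in> perms n"
proof -
  have abs_w: "distinct (map abs w)" "set (map abs w) = {1..int n}" "length w = n"
    using assms by (auto simp: signed_perms_def)
  have "inj_on nat (set (map abs w))"
    by (auto simp: inj_on_def)
  then have "distinct (map nat (map abs w))"
    using abs_w(1) distinct_map by blast
  moreover have "set (map nat (map abs w)) = {1..n}"
  proof -
    have "set (map nat (map abs w)) = nat ` {1..int n}"
      unfolding list.set_map(1)[of nat "map abs w"] abs_w(2) ..
    also have "\<dots> = nat ` int ` {1..n}"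
      by (simp only: image_int_atLeastAtMost of_nat_1)
    finally show ?thesis
      by (simp add: image_image)
  qed
  ultimately show ?thesis
    using abs_w(3) by (simp add: perms_def comp_def)
qed

lemma phi_eq_0:
  assumes "u \<notin> perms n"
  shows "phi n f u = 0"
proof -
  have "{w \<in> signed_perms n. map (\<lambda>x. nat \<bar>x\<bar>) w = u} = {}"
    using assms abs_signed_perm_in_perms by blast
  then show ?thesis by (simp only: phi_def sum.empty)
qed

lemma phi_eq_sum_flip_signs:
  assumes "u \<in> perms n"
  shows "phi n f u = (\<Sum>N \<in> Pow {..<n}. f (flip_signs u N))"
proof -
  have "inj_on (flip_signs u) (Pow {..<n})"
    using inj_on_flip_signs permsD[OF assms] by metis
  then show ?thesis
    by (simp add: phi_def fiber_eq_image_flip_signs[OF assms] sum.reindex)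
qed

lemma phi_indicator_eq_card:
  assumes "u \<in> perms n" and "\<And>w. w \<in> signed_perms n \<Longrightarrow> f w = of_bool (Q w)"
  shows "phi n f u = int (card {N. N \<subseteq> {..<n} \<and> Q (flip_signs u N)})"
proof -
  have "flip_signs u N \<in> signed_perms n" if "N \<subseteq> {..<n}" for N
    using that fiber_eq_image_flip_signs[OF assms(1)] by blast
  then have "phi n f u = (\<Sum>N \<in> Pow {..<n}. of_bool (Q (flip_signs u N)))"
    unfolding phi_eq_sum_flip_signs[OF assms(1)] using assms(2) by (intro sum.cong) auto
  also have "\<dots> = int (card (Pow {..<n} \<inter> {N. Q (flip_signs u N)}))"
    by simp
  also have "Pow {..<n} \<inter> {N. Q (flip_signs u N)} = {N. N \<subseteq> {..<n} \<and> Q (flip_signs u N)}"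
    by blast
  finally show ?thesis .
qed

(* Positions in Des are 1-based (i compares w_i with w_(i+1), i.e. list entries i - 1 and i),
   whereas larger_idx u i is the 0-based list index of the larger of u_i and u_(i+1). *)
definition larger_idx :: "nat list \<Rightarrow> nat \<Rightarrow> nat" where
  "larger_idx u i = (if u ! (i - 1) < u ! i then i else i - 1)"

lemma larger_idx_less:
  assumes "0 < i" "i < n"
  shows "larger_idx u i < n"
  using assms by (simp add: larger_idx_def less_imp_diff_less)

lemma Des_minus_0_subset:
  assumes "w \<in> signed_perms n"
  shows "Des w - {0} \<subseteq> {1..<n}"
  using assms by (auto simp: Des_def signed_perms_def)

lemma Des_flip_signs_iff:
  assumes "distinct u" "0 \<notin> set u" "0 < i" "i < length u"
  shows "i \<in> Des (flip_signs u N) \<longleftrightarrow> (larger_idx u i \<in> N \<longleftrightarrow> larger_idx u i = i)"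
proof -
  \<comment> \<open>Comparing \<open>\<plusminus>a\<close> with \<open>\<plusminus>b\<close> for \<open>0 < a < b\<close>, only the sign of \<open>b\<close> matters.\<close>
  have "u ! (i - 1) \<noteq> u ! i"
    using assms by (simp add: nth_eq_iff_index_eq)
  moreover have "0 < u ! k" if "k < length u" for k
    using nth_mem[OF that] assms(2) by (metis gr0I)
  ultimately show ?thesis
    using assms(3,4) by (auto simp: Des_def wval_def larger_idx_def)
qed

lemma Peak0_subset: "Peak0 u \<subseteq> {2..<length u}"
  by (auto simp: Peak0_def)

lemma Peak0_pred_notin:
  assumes "p \<in> Peak0 u"
  shows "p - 1 \<notin> Peak0 u"
  using assms by (auto simp: Peak0_def numeral_2_eq_2)

lemma larger_idx_at_Peak0:
  assumes "p \<in> Peak0 u"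
  shows "larger_idx u (p - 1) = p - 1" "larger_idx u p = p - 1"
proof -
  have "2 \<le> p" "u ! (p - 2) < u ! (p - 1)" "u ! p < u ! (p - 1)"
    using assms by (auto simp: Peak0_def)
  moreover have "p - 1 - 1 = p - 2" by simp
  ultimately show "larger_idx u (p - 1) = p - 1" "larger_idx u p = p - 1"
    by (auto simp: larger_idx_def)
qed

lemma larger_idx_eq_iff:
  assumes "distinct u" "0 < i" "i < j" "j < length u"
  shows "larger_idx u i = larger_idx u j \<longleftrightarrow> j = Suc i \<and> Suc i \<in> Peak0 u"
proof
  assume "larger_idx u i = larger_idx u j"
  then have j: "j = Suc i" and "u ! (i - 1) < u ! i" "\<not> u ! i < u ! Suc i"
    using assms(2,3) by (auto simp: larger_idx_def split: if_splits)
  moreover have "u ! Suc i \<noteq> u ! i"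
    using assms(1,4) j by (simp add: nth_eq_iff_index_eq)
  ultimately show "j = Suc i \<and> Suc i \<in> Peak0 u"
    using assms by (auto simp: Peak0_def)
next
  assume "j = Suc i \<and> Suc i \<in> Peak0 u"
  then show "larger_idx u i = larger_idx u j"
    using larger_idx_at_Peak0[of "Suc i" u] by simp
qed

lemma larger_idx_consistent_iff:
  assumes "distinct u" "S \<subseteq> {1..<length u}"
  shows "(\<forall>i\<in>S. \<forall>j\<in>S. larger_idx u i = larger_idx u j \<longrightarrow> P i = P j) \<longleftrightarrow>
    (\<forall>p\<in>Peak0 u. p - 1 \<in> S \<and> p \<in> S \<longrightarrow> P (p - 1) = P p)"
proof
  assume H: "\<forall>i\<in>S. \<forall>j\<in>S. larger_idx u i = larger_idx u j \<longrightarrow> P i = P j"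
  show "\<forall>p\<in>Peak0 u. p - 1 \<in> S \<and> p \<in> S \<longrightarrow> P (p - 1) = P p"
    using H larger_idx_at_Peak0 by metis
next
  assume H: "\<forall>p\<in>Peak0 u. p - 1 \<in> S \<and> p \<in> S \<longrightarrow> P (p - 1) = P p"
  have "P i = P j" if "i \<in> S" "j \<in> S" "i < j" "larger_idx u i = larger_idx u j" for i j
  proof -
    have "0 < i" "j < length u"
      using that assms(2) by auto
    then have "j = Suc i" "Suc i \<in> Peak0 u"
      using larger_idx_eq_iff[of u i j] that assms(1) by auto
    then show ?thesis
      using H that by fastforce
  qed
  then show "\<forall>i\<in>S. \<forall>j\<in>S. larger_idx u i = larger_idx u j \<longrightarrow> P i = P j"
    by (metis linorder_neqE_nat)
qed

lemma card_larger_idx_image: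
  assumes "distinct u" "S \<subseteq> {1..<length u}"
  shows "card (larger_idx u ` S) + card {p \<in> Peak0 u. p - 1 \<in> S \<and> p \<in> S} = card S"
proof -
  define C where "C = {p \<in> Peak0 u. p - 1 \<in> S \<and> p \<in> S}"
  have fin: "finite S"
    using assms(2) finite_subset by blast
  have "larger_idx u ` S = larger_idx u ` (S - C)"
  proof (intro equalityI subsetI)
    fix x assume "x \<in> larger_idx u ` S"
    then obtain i where i: "i \<in> S" "x = larger_idx u i" by blast
    show "x \<in> larger_idx u ` (S - C)"
    proof (cases "i \<in> C")
      case True
      then have "i - 1 \<in> S - C" "larger_idx u (i - 1) = larger_idx u i"
        using Peak0_pred_notin larger_idx_at_Peak0 by (auto simp: C_def)
      then show ?thesis using i by (metis image_eqI)
    qed (use i in blast)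
  qed blast
  moreover have "inj_on (larger_idx u) (S - C)"
  proof (rule linorder_inj_onI')
    fix i j assume "i \<in> S - C" "j \<in> S - C" "i < j"
    then show "larger_idx u i \<noteq> larger_idx u j"
      using assms larger_idx_eq_iff[of u i j] by (force simp: C_def)
  qed
  moreover have "C \<subseteq> S" by (auto simp: C_def)
  ultimately have "card (larger_idx u ` S) = card S - card C"
    using fin by (simp add: card_image card_Diff_subset finite_subset)
  moreover have "card C \<le> card S"
    using \<open>C \<subseteq> S\<close> fin by (rule card_mono[rotated])
  ultimately show ?thesis
    by (simp add: C_def)
qed

lemma phi_eq_count_descent_pattern:
  assumes u: "u \<in> perms n" and S: "S \<subseteq> {1..<n}"
    and f: "\<And>w. w \<in> signed_perms n \<Longrightarrow> f w = of_bool (\<forall>i\<in>S. i \<in> Des w \<longleftrightarrow> P i)"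
  shows "phi n f u =
    (if \<forall>p\<in>Peak0 u. p - 1 \<in> S \<and> p \<in> S \<longrightarrow> P (p - 1) \<noteq> P p
     then 2 ^ (n - card S + card {p \<in> Peak0 u. p - 1 \<in> S \<and> p \<in> S}) else 0)"
proof -
  note u' = permsD[OF u]
  define Q where "Q i = (larger_idx u i = i \<longleftrightarrow> P i)" for i
  define C where "C = {p \<in> Peak0 u. p - 1 \<in> S \<and> p \<in> S}"
  have S': "S \<subseteq> {1..<length u}"
    using S u'(1) by simp
  have "(\<forall>i\<in>S. i \<in> Des (flip_signs u N) \<longleftrightarrow> P i) \<longleftrightarrow> (\<forall>i\<in>S. larger_idx u i \<in> N \<longleftrightarrow> Q i)" for N
    using S' Des_flip_signs_iff[OF u'(2,3)] by (force simp: Q_def)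
  then have "phi n f u = int (card {N. N \<subseteq> {..<n} \<and> (\<forall>i\<in>S. larger_idx u i \<in> N \<longleftrightarrow> Q i)})"
    using phi_indicator_eq_card[OF u f] by simp
  also have "card {N. N \<subseteq> {..<n} \<and> (\<forall>i\<in>S. larger_idx u i \<in> N \<longleftrightarrow> Q i)} =
    (if \<forall>i\<in>S. \<forall>j\<in>S. larger_idx u i = larger_idx u j \<longrightarrow> Q i = Q j
     then 2 ^ card ({..<n} - larger_idx u ` S) else 0)"
    using S larger_idx_less by (intro card_subsets_with_prescribed_members) auto
  also have "(\<forall>i\<in>S. \<forall>j\<in>S. larger_idx u i = larger_idx u j \<longrightarrow> Q i = Q j) \<longleftrightarrow>
      (\<forall>p\<in>Peak0 u. p - 1 \<in> S \<and> p \<in> S \<longrightarrow> P (p - 1) \<noteq> P p)"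
  proof -
    have "Q (p - 1) = Q p \<longleftrightarrow> P (p - 1) \<noteq> P p" if "p \<in> Peak0 u" for p
      using larger_idx_at_Peak0[OF that] Peak0_subset[of u] that by (fastforce simp: Q_def)
    then show ?thesis
      unfolding larger_idx_consistent_iff[OF u'(2) S'] by blast
  qed
  also have "card ({..<n} - larger_idx u ` S) = n - card S + card C"
  proof -
    have "finite S"
      using S finite_subset by blast
    then have "card C \<le> card S"
      by (rule card_mono) (auto simp: C_def)
    moreover have "card (larger_idx u ` S) + card C = card S"
      unfolding C_def by (rule card_larger_idx_image[OF u'(2) S'])
    moreover have "larger_idx u ` S \<subseteq> {..<n}"
      using S larger_idx_less by auto
    moreover have "card S \<le> n"
      using card_mono[OF _ S] by simp
    ultimately show ?thesis
      by (simp add: card_Diff_subset finite_subset)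
  qed
  finally show ?thesis
    by (simp add: C_def)
qed

lemma phi_X0_perm:
  assumes u: "u \<in> perms n" and n: "1 \<le> n" and J: "J \<subseteq> {1..<n}"
  shows "phi n (X0 n J) u = (if Peak0 u \<subseteq> J \<union> (\<lambda>j. j + 1) ` J then 2 ^ (1 + card J) else 0)"
proof -
  define S where "S = {1..<n} - J"
  define C where "C = {p \<in> Peak0 u. p - 1 \<in> S \<and> p \<in> S}"
  have "X0 n J w = of_bool (\<forall>i\<in>S. i \<in> Des w \<longleftrightarrow> False)" if "w \<in> signed_perms n" for w
  proof -
    have "Des w \<subseteq> insert 0 J \<longleftrightarrow> (\<forall>i\<in>S. i \<notin> Des w)"
      using Des_minus_0_subset[OF that] by (auto simp: S_def subset_iff)
    then show ?thesis
      using that by (simp add: X0_def Xsum_def)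
  qed
  from phi_eq_count_descent_pattern[OF u _ this]
  have phi_eq: "phi n (X0 n J) u = (if C = {} then 2 ^ (n - card S + card C) else 0)"
    unfolding C_def by (simp add: S_def)
  have "p \<notin> C \<longleftrightarrow> p \<in> J \<union> (\<lambda>j. j + 1) ` J" if "p \<in> Peak0 u" for p
  proof -
    have "2 \<le> p" "p < n"
      using that Peak0_subset[of u] permsD(1)[OF u] by auto
    then show ?thesis
      using that mem_image_plus1_iff[of p J] by (auto simp: S_def C_def)
  qed
  then have "C = {} \<longleftrightarrow> Peak0 u \<subseteq> J \<union> (\<lambda>j. j + 1) ` J"
    unfolding C_def by blast
  moreover have "n - card S = 1 + card J"
    using n J card_mono[OF _ J] by (simp add: S_def card_Diff_subset finite_subset)
  ultimately show ?thesis
    using phi_eq by auto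
qed

lemma phi_Y0_perm:
  assumes u: "u \<in> perms n" and n: "1 \<le> n" and J: "J \<subseteq> {1..<n}"
  shows "phi n (Y0 n J) u =
    (if Peak0 u \<subseteq> (J - (\<lambda>j. j + 1) ` J) \<union> ((\<lambda>j. j + 1) ` J - J)
     then 2 ^ (1 + card (Peak0 u)) else 0)"
proof -
  have "Y0 n J w = of_bool (\<forall>i\<in>{1..<n}. i \<in> Des w \<longleftrightarrow> i \<in> J)" if "w \<in> signed_perms n" for w
  proof -
    have "Des w - {0} = J \<longleftrightarrow> (\<forall>i\<in>{1..<n}. i \<in> Des w \<longleftrightarrow> i \<in> J)"
      using Des_minus_0_subset[OF that] J by (auto simp: subset_iff)
    moreover have "0 \<notin> J"
      using J by auto
    ultimately show ?thesis
      using that by (auto simp: Y0_def Ysum_def)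
  qed
  note phi_eq = phi_eq_count_descent_pattern[OF u _ this]
  have peak: "p - 1 \<in> {1..<n} \<and> p \<in> {1..<n}" "(p - 1 \<in> J) \<noteq> (p \<in> J) \<longleftrightarrow>
      p \<in> (J - (\<lambda>j. j + 1) ` J) \<union> ((\<lambda>j. j + 1) ` J - J)" if "p \<in> Peak0 u" for p
  proof -
    show "p - 1 \<in> {1..<n} \<and> p \<in> {1..<n}"
      using that Peak0_subset[of u] permsD(1)[OF u] by force
    then show "(p - 1 \<in> J) \<noteq> (p \<in> J) \<longleftrightarrow>
      p \<in> (J - (\<lambda>j. j + 1) ` J) \<union> ((\<lambda>j. j + 1) ` J - J)"
      using mem_image_plus1_iff[of p J] by auto
  qed
  then have "{p \<in> Peak0 u. p - 1 \<in> {1..<n} \<and> p \<in> {1..<n}} = Peak0 u"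
    by blast
  moreover have "(\<forall>p\<in>Peak0 u. p - 1 \<in> {1..<n} \<and> p \<in> {1..<n} \<longrightarrow> (p - 1 \<in> J) \<noteq> (p \<in> J)) \<longleftrightarrow>
      Peak0 u \<subseteq> (J - (\<lambda>j. j + 1) ` J) \<union> ((\<lambda>j. j + 1) ` J - J)"
    using peak by blast
  moreover have "n - card {1..<n} = 1"
    using n by simp
  ultimately show ?thesis
    using phi_eq by simp
qed

lemma Peak0_in_F0: "length u = n \<Longrightarrow> Peak0 u \<in> F0 n"
  by (auto simp: F0_def Peak0_def)

lemma sum_P0_weighted:
  assumes "u \<in> perms n"
  shows "(\<Sum>F \<in> {F \<in> F0 n. F \<subseteq> T}. g F * P0 n F u) = (if Peak0 u \<subseteq> T then g (Peak0 u) else 0)"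
proof -
  have "(\<Sum>F \<in> {F \<in> F0 n. F \<subseteq> T}. g F * P0 n F u) =
      (\<Sum>F \<in> {F \<in> F0 n. F \<subseteq> T}. if Peak0 u = F then g F else 0)"
    using assms by (intro sum.cong) (auto simp: P0_def)
  also have "\<dots> = (if Peak0 u \<in> {F \<in> F0 n. F \<subseteq> T} then g (Peak0 u) else 0)"
    by (rule sum.delta') (auto intro: finite_subset[of _ "Pow {2..n - 1}"] simp: F0_def)
  finally show ?thesis
    using Peak0_in_F0[OF permsD(1)[OF assms]] by simp
qed

theorem proposition5p8:
  fixes n :: nat and J :: "nat set"
  assumes "1 \<le> n" and "J \<subseteq> {1..n - 1}"
  shows "phi n (X0 n J) =
           (\<lambda>u. 2 ^ (1 + card J) *
              (\<Sum>F \<in> {F \<in> F0 n. F \<subseteq> J \<union> (\<lambda>j. j + 1) ` J}. P0 n F u)) \<and>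
         phi n (Y0 n J) =
           (\<lambda>u. \<Sum>F \<in> {F \<in> F0 n. F \<subseteq> (J - (\<lambda>j. j + 1) ` J) \<union> ((\<lambda>j. j + 1) ` J - J)}.
              2 ^ (1 + card F) * P0 n F u)"
proof (intro conjI ext)
  fix u
  have J: "J \<subseteq> {1..<n}"
    using assms(2) by (auto simp: subset_iff)
  have P0_0: "P0 n F u = 0" if "u \<notin> perms n" for F
    using that by (simp add: P0_def)
  show "phi n (X0 n J) u =
      2 ^ (1 + card J) * (\<Sum>F \<in> {F \<in> F0 n. F \<subseteq> J \<union> (\<lambda>j. j + 1) ` J}. P0 n F u)"
    using phi_X0_perm[OF _ assms(1) J] sum_P0_weighted[where g = "\<lambda>_. 1"] phi_eq_0 P0_0
    by (cases "u \<in> perms n") simp_all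
  show "phi n (Y0 n J) u =
      (\<Sum>F \<in> {F \<in> F0 n. F \<subseteq> (J - (\<lambda>j. j + 1) ` J) \<union> ((\<lambda>j. j + 1) ` J - J)}.
        2 ^ (1 + card F) * P0 n F u)"
    using phi_Y0_perm[OF _ assms(1) J] sum_P0_weighted phi_eq_0 P0_0
    by (cases "u \<in> perms n") simp_all
qed

end
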